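(* Let $G$ be a finite abelian group and let $k \in \mathbb{N}$. Let $B$ be a zero-sum sequence over $G$ with $\max\mathsf{L}(B)=k$. If there exist a factorization $\zeta$ of $B$ with $|\zeta|=k$ and a minimal zero-sum sequence $U$ occurring at least $\delta(G)$ times as a factor in $\zeta$, then $\max \mathsf{L}(BU)=k+1$.
   Context: $G$ is written additively. A sequence over $G$ is an element of the free abelian monoid $\mathcal{F}(G)$ (finite unordered list with repetitions). A zero-sum sequence has terms summing to $0$; a minimal zero-sum sequence is a non-empty zero-sum sequence with no proper non-empty zero-sum subsequence; $\mathcal{A}(G)$ is the set of these. Factorizations are elements of the free abelian monoid $\mathsf{Z}(G)$ over $\mathcal{A}(G)$ (formal unordered products of minimal zero-sum sequences); $\pi$ evaluates the product; a factorization of $B$ is a $\zeta$ with $\pi(\zeta)=B$; $|\zeta|$ is the number of factors; $\mathsf{L}(B)$ is the set of lengths of factorizations of $B$. $\mathsf{d}(\zeta,\xi)=\max\{|\gcd(\zeta,\xi)^{-1}\zeta|,|\gcd(\zeta,\xi)^{-1}\xi|\}$. Distinct $k,\ell\in\mathsf{L}(B)$ are adjacent lengths if no element of $\mathsf{L}(B)$ lies strictly between them. $\delta(\zeta)$ is the smallest $m\in\mathbb{N}_0$ such that for every $k\in\mathbb{N}$ with $k$, $|\zeta|$ adjacent lengths of $\pi(\zeta)$ there exists a factorization $\xi$ of $\pi(\zeta)$ with $|\xi|=k$ and $\mathsf{d}(\xi,\zeta)\le m$; $\delta(G)=\sup\{\delta(\zeta):\zeta\in\mathsf{Z}(G)\}$.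 *)

theory Defs
  imports Main "HOL-Library.Multiset" "HOL-Library.Extended_Nat"
begin

(* Sequences over G are multisets over the finite abelian group type 'a. *)

definition zero_sum :: "'a::ab_group_add multiset \<Rightarrow> bool" where
  "zero_sum S \<longleftrightarrow> sum_mset S = 0"

definition min_zero_sum :: "'a::ab_group_add multiset \<Rightarrow> bool" where
  "min_zero_sum S \<longleftrightarrow> S \<noteq> {#} \<and> zero_sum S \<and>
     (\<forall>T. T \<subseteq># S \<and> T \<noteq> {#} \<and> zero_sum T \<longrightarrow> T = S)"

definition atoms :: "'a::ab_group_add multiset set" where
  "atoms = {S. min_zero_sum S}"

definition is_fact :: "'a::ab_group_add multiset multiset \<Rightarrow> bool" where
  "is_fact z \<longleftrightarrow> set_mset z \<subseteq> atoms"

definition fact_pi :: "'a::ab_group_add multiset multiset \<Rightarrow> 'a multiset" where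
  "fact_pi z = sum_mset z"

definition facts :: "'a::ab_group_add multiset \<Rightarrow> 'a multiset multiset set" where
  "facts B = {z. is_fact z \<and> fact_pi z = B}"

definition lengths :: "'a::ab_group_add multiset \<Rightarrow> nat set" where
  "lengths B = size ` facts B"

definition fdist :: "'a multiset multiset \<Rightarrow> 'a multiset multiset \<Rightarrow> nat" where
  "fdist z x = max (size (z - (z \<inter># x))) (size (x - (z \<inter># x)))"

definition adjacent_lengths :: "'a::ab_group_add multiset \<Rightarrow> nat \<Rightarrow> nat \<Rightarrow> bool" where
  "adjacent_lengths B k l \<longleftrightarrow> k \<noteq> l \<and> k \<in> lengths B \<and> l \<in> lengths B \<and>
     \<not> (\<exists>m\<in>lengths B. min k l < m \<and> m < max k l)"

definition delta_fact :: "'a::ab_group_add multiset multiset \<Rightarrow> nat" where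
  "delta_fact z = (LEAST m::nat. \<forall>k::nat. k \<ge> 1 \<and> adjacent_lengths (fact_pi z) k (size z) \<longrightarrow>
      (\<exists>x. x \<in> facts (fact_pi z) \<and> size x = k \<and> fdist x z \<le> m))"

definition delta_group :: "'a::ab_group_add itself \<Rightarrow> enat" where
  "delta_group _ = (SUP z\<in>{z::'a multiset multiset. is_fact z}. enat (delta_fact z))"

end

theory Submission
  imports Defs
begin

text \<open>Multiply the length-\<open>k\<close> factorization \<open>\<zeta>\<close> by \<open>U\<close> to get a factorization \<open>w\<close> of
  \<open>BU\<close> of length \<open>k + 1\<close>. If \<open>BU\<close> had a longer factorization, there would be a length \<open>l > k + 1\<close>
  adjacent to \<open>k + 1\<close>, hence a factorization \<open>x\<close> of length \<open>l\<close> with \<open>d(x, w) \<le> \<delta>(G)\<close>. Since \<open>U\<close>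
  occurs more than \<open>\<delta>(G)\<close> times in \<open>w\<close>, it must occur in \<open>x\<close>, and removing it from \<open>x\<close> leaves a
  factorization of \<open>B\<close> of length \<open>l - 1 > k = max L(B)\<close>.\<close>

lemma atom_nonempty: "U \<in> atoms \<Longrightarrow> U \<noteq> {#}"
  by (simp add: atoms_def min_zero_sum_def)

lemma size_le_size_fact_pi: "is_fact x \<Longrightarrow> size x \<le> size (fact_pi x)"
proof (induction x)
  case empty
  then show ?case by simp
next
  case (add a x)
  then have "a \<noteq> {#}" "is_fact x" by (auto simp: is_fact_def atom_nonempty)
  then show ?case using add.IH by (simp add: fact_pi_def Suc_le_eq nonempty_has_size)
qed

lemma lengths_le_size: "l \<in> lengths B \<Longrightarrow> l \<le> size B"
  using size_le_size_fact_pi by (auto simp: lengths_def facts_def)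

lemma finite_lengths: "finite (lengths B)"
  by (rule finite_subset[of _ "{0..size B}"]) (auto dest: lengths_le_size)

lemma fdist_le_max_size: "fdist x z \<le> max (size x) (size z)"
proof -
  have "size (z - (x \<inter># z)) \<le> size z" "size (x - (x \<inter># z)) \<le> size x"
    by (auto intro: size_mset_mono)
  then show ?thesis unfolding fdist_def by linarith
qed

lemma count_le_fdist:
  assumes "y \<notin># x"
  shows "count z y \<le> fdist x z"
proof -
  have "count z y = count (z - (z \<inter># x)) y"
    using assms by (simp add: not_in_iff)
  also have "\<dots> \<le> size (z - (z \<inter># x))" by (rule count_le_size)
  also have "\<dots> \<le> fdist x z" unfolding fdist_def by (simp add: inf_commute)
  finally show ?thesis .
qed

lemma delta_fact_witness:
  assumes "k \<ge> 1" "adjacent_lengths (fact_pi z) k (size z)"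
  shows "\<exists>x \<in> facts (fact_pi z). size x = k \<and> fdist x z \<le> delta_fact z"
proof -
  let ?P = "\<lambda>m::nat. \<forall>k::nat. k \<ge> 1 \<and> adjacent_lengths (fact_pi z) k (size z) \<longrightarrow>
      (\<exists>x. x \<in> facts (fact_pi z) \<and> size x = k \<and> fdist x z \<le> m)"
  \<comment> \<open>The least in the definition of \<open>delta_fact\<close> exists, since \<open>|\<pi>(z)|\<close> bounds all distances.\<close>
  have "?P (size (fact_pi z))"
  proof (intro allI impI)
    fix k assume "k \<ge> 1 \<and> adjacent_lengths (fact_pi z) k (size z)"
    then have "k \<in> lengths (fact_pi z)" "size z \<in> lengths (fact_pi z)"
      by (auto simp: adjacent_lengths_def)
    then obtain x where x: "x \<in> facts (fact_pi z)" "size x = k"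
      by (auto simp: lengths_def)
    have "size x \<le> size (fact_pi z)" "size z \<le> size (fact_pi z)"
      using lengths_le_size \<open>k \<in> _\<close> \<open>size z \<in> _\<close> x(2) by auto
    then have "fdist x z \<le> size (fact_pi z)" using fdist_le_max_size[of x z] by linarith
    with x show "\<exists>x. x \<in> facts (fact_pi z) \<and> size x = k \<and> fdist x z \<le> size (fact_pi z)"
      by blast
  qed
  then have "?P (delta_fact z)" unfolding delta_fact_def by (rule LeastI)
  with assms show ?thesis by blast
qed

lemma delta_fact_le_delta_group:
  fixes z :: "'a::ab_group_add multiset multiset"
  shows "is_fact z \<Longrightarrow> enat (delta_fact z) \<le> delta_group TYPE('a)"
  unfolding delta_group_def by (rule SUP_upper) auto

lemma add_atom_in_facts:
  "z \<in> facts B \<Longrightarrow> U \<in> atoms \<Longrightarrow> add_mset U z \<in> facts (B + U)"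
  by (auto simp: facts_def is_fact_def fact_pi_def)

lemma remove_atom_in_facts:
  "add_mset U y \<in> facts (B + U) \<Longrightarrow> y \<in> facts B"
  by (auto simp: facts_def is_fact_def fact_pi_def)

lemma adjacent_length_above:
  assumes "k \<in> lengths B" "\<exists>m \<in> lengths B. k < m"
  obtains l where "k < l" "adjacent_lengths B l k"
proof -
  define S where "S = {m \<in> lengths B. k < m}"
  have "S \<noteq> {}" "finite S" using assms(2) finite_lengths[of B] by (auto simp: S_def)
  then have "Min S \<in> S" "\<forall>m \<in> S. Min S \<le> m" by simp_all
  then have "k < Min S" "adjacent_lengths B (Min S) k"
    using assms(1) by (auto simp: S_def adjacent_lengths_def)
  then show ?thesis by (rule that)
qed

theorem lemma6p3:
  fixes B U :: "'a::{finite, ab_group_add} multiset"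
    and z :: "'a multiset multiset"
    and k :: nat
  assumes "k \<ge> 1"
    and "zero_sum B"
    and "Max (lengths B) = k"
    and "z \<in> facts B"
    and "size z = k"
    and "U \<in> atoms"
    and "enat (count z U) \<ge> delta_group TYPE('a)"
  shows "Max (lengths (B + U)) = k + 1"
proof -
  define w where "w = add_mset U z"
  have w: "w \<in> facts (B + U)" "size w = k + 1"
    using add_atom_in_facts[OF assms(4,6)] assms(5) by (simp_all add: w_def)
  then have "k + 1 \<in> lengths (B + U)" unfolding lengths_def by force
  moreover have "\<not> (\<exists>m \<in> lengths (B + U). k + 1 < m)"
  proof
    assume "\<exists>m \<in> lengths (B + U). k + 1 < m"
    with \<open>k + 1 \<in> _\<close> obtain l where l: "k + 1 < l" "adjacent_lengths (B + U) l (k + 1)"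
      by (rule adjacent_length_above)
    then obtain x where x: "x \<in> facts (B + U)" "size x = l" "fdist x w \<le> delta_fact w"
      using delta_fact_witness[of l w] w by (auto simp: facts_def)
    have "delta_fact w \<le> count z U"
      using order_trans[OF delta_fact_le_delta_group[of w] assms(7)] w(1) by (simp add: facts_def)
    then have "U \<in># x" using count_le_fdist[of U x w] x(3) by (force simp: w_def)
    then obtain y where "x = add_mset U y" by (metis mset_add)
    with x have "y \<in> facts B" "size y = l - 1" by (auto intro: remove_atom_in_facts)
    then have "l - 1 \<le> k"
      using assms(3) Max_ge[OF finite_lengths] by (force simp: lengths_def)
    with l(1) show False by simp
  qed
  ultimately show ?thesis using finite_lengths by (metis Max_eqI not_le)
qed

end
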